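(* Let $A\in\mathbb R^{d\times d}$, $r>0$, and let $\mathbf x(t)$ be a solution (with initial function in $C([-r,0],\Delta_d)$) of one of the delayed replicator equations $$\dot{\mathbf x}(t)=\mathbf x(t)\cdot\big(A\mathbf x(t-r)-\mathbf x(t)^{\top}A\mathbf x(t-r)\big)$$ or $$\dot{\mathbf x}(t)=\mathbf x(t)\cdot\big(A\bar{\mathbf x}(t)-\mathbf x(t)^{\top}A\bar{\mathbf x}(t)\big),\qquad \bar{\mathbf x}(t)=\int_{-r}^0\mathbf x(t+s)\,d\mu(s),$$ where $\mu$ is a probability measure on $[-r,0]$ and $\cdot$ denotes the componentwise product. Then: (a) If the replicator ODE $\dot{\mathbf x}=\mathbf x\cdot(A\mathbf x-\mathbf x^\top A\mathbf x)$ has no interior equilibrium, then $\mathbf x(t)$ approaches the boundary of the simplex $\Delta_d$ asymptotically. (b) If the replicator ODE has a unique interior equilibrium $\mathbf p$, then $p_i=\lim_{T\to\infty}\frac1T\int_0^T x_i(t)\,dt$ for all $i$, provided the solution $\mathbf x(t)$ lies in the interior of $\Delta_d$ and remains bounded away from the boundary of $\Delta_d$.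
   Context: $\Delta_d=\{\mathbf x\in\mathbb R_+^d:\sum_i x_i=1\}$. An interior equilibrium of the replicator ODE is a point $\mathbf p$ in the interior of $\Delta_d$ with $(A\mathbf p)_i=(A\mathbf p)_j$ for all $i,j$. *)

theory Defs
  imports "HOL-Probability.Probability"
begin

definition prob_simplex :: "(real^'d) set" where
  "prob_simplex = {x. (\<forall>i. 0 \<le> x $ i) \<and> (\<Sum>i\<in>UNIV. x $ i) = 1}"

definition simplex_interior :: "(real^'d) set" where
  "simplex_interior = {x. (\<forall>i. 0 < x $ i) \<and> (\<Sum>i\<in>UNIV. x $ i) = 1}"

definition simplex_boundary :: "(real^'d) set" where
  "simplex_boundary = {x \<in> prob_simplex. \<exists>i. x $ i = 0}"

definition interior_equilibrium :: "real^'d^'d \<Rightarrow> real^'d \<Rightarrow> bool" where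
  "interior_equilibrium A p \<longleftrightarrow> p \<in> simplex_interior \<and> (\<forall>i j. (A *v p) $ i = (A *v p) $ j)"

definition rep_field :: "real^'d^'d \<Rightarrow> real^'d \<Rightarrow> real^'d \<Rightarrow> real^'d" where
  "rep_field A x y = (\<chi> i. x $ i * ((A *v y) $ i - x \<bullet> (A *v y)))"

definition delayed_replicator_solution :: "real^'d^'d \<Rightarrow> real \<Rightarrow> (real \<Rightarrow> real^'d) \<Rightarrow> bool" where
  "delayed_replicator_solution A r x \<longleftrightarrow>
     continuous_on {-r..} x \<and> (\<forall>t\<in>{-r..0}. x t \<in> prob_simplex) \<and>
     (\<forall>t\<ge>0. (x has_vector_derivative rep_field A (x t) (x (t - r))) (at t within {0..}))"

definition distributed_replicator_solution ::
  "real^'d^'d \<Rightarrow> real \<Rightarrow> real measure \<Rightarrow> (real \<Rightarrow> real^'d) \<Rightarrow> bool" where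
  "distributed_replicator_solution A r \<mu> x \<longleftrightarrow>
     prob_space \<mu> \<and> sets \<mu> = sets borel \<and> measure \<mu> {-r..0} = 1 \<and>
     continuous_on {-r..} x \<and> (\<forall>t\<in>{-r..0}. x t \<in> prob_simplex) \<and>
     (\<forall>t\<ge>0. (x has_vector_derivative
        rep_field A (x t) (integral\<^sup>L \<mu> (\<lambda>s. indicator {-r..0} s *\<^sub>R x (t + s))))
        (at t within {0..}))"

end

theory Submission
  imports Defs
begin

text \<open>
  Both equations are covered by the distributed-delay equation, the discrete delay being the
  Dirac measure at \<open>-r\<close>. Each component solves a scalar linear equation
  \<open>x\<^sub>i' = x\<^sub>i g\<^sub>i(t)\<close>, so the simplex and each of its faces are invariant.
  For weights \<open>c\<close> with \<open>\<Sum> c\<^sub>i = 0\<close> the function \<open>V = \<Sum> c\<^sub>i ln x\<^sub>i\<close> has derivative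
  \<open>(A\<^sup>T c) \<bullet> xbar\<close>, so by Fubini its increments are \<open>\<mu>\<close>-averages of integrals of
  \<open>(A\<^sup>T c) \<bullet> x\<close> over shifted intervals.

  (a) Without an interior equilibrium, the subspace of vectors with equal payoffs misses the
  positive orthant, and a Gordan-type separation gives \<open>c\<close> with \<open>A\<^sup>T c \<ge> 0\<close>, \<open>A\<^sup>T c \<noteq> 0\<close>.
  Then \<open>V\<close> is nondecreasing, it is bounded at every time at which \<open>x\<close> is \<open>\<epsilon>\<close>-far from the
  boundary, and since \<open>x\<close> is Lipschitz it gains a fixed amount around each such time; so such
  times cannot recur.

  (b) If \<open>x\<close> stays away from the boundary, \<open>ln x\<^sub>i - ln x\<^sub>j\<close> is bounded, hence
  \<open>(A\<^sub>i - A\<^sub>j) \<bullet> (time average of x) \<rightarrow> 0\<close>. The time averages lie in a compact subset of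
  the interior on which \<open>p\<close> is the only point with equal payoffs.
\<close>

section \<open>Elementary analysis\<close>

lemma has_real_derivative_nonneg_imp_le:
  fixes f f' :: "real \<Rightarrow> real"
  assumes "a \<le> b"
    and "\<And>t. t \<in> {a..b} \<Longrightarrow> (f has_real_derivative f' t) (at t within {a..b})"
    and "\<And>t. t \<in> {a..b} \<Longrightarrow> 0 \<le> f' t"
  shows "f a \<le> f b"
proof -
  have "(f' has_integral f b - f a) {a..b}"
    using fundamental_theorem_of_calculus[OF assms(1), of f] assms(2)
    by (simp add: has_real_derivative_iff_has_vector_derivative)
  then show ?thesis
    using has_integral_nonneg[OF _ assms(3)] by force
qed

lemma linear_ode_zero_iff:
  fixes u g :: "real \<Rightarrow> real"
  assumes "a \<le> b"
    and u': "\<And>t. t \<in> {a..b} \<Longrightarrow> (u has_real_derivative u t * g t) (at t within {a..b})"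
    and g: "\<And>t. t \<in> {a..b} \<Longrightarrow> \<bar>g t\<bar> \<le> M"
  shows "u a = 0 \<longleftrightarrow> u b = 0"
proof -
  have weighted_sq': "((\<lambda>t. u t ^ 2 * exp (\<sigma> * t)) has_real_derivative
      (2 * g t + \<sigma>) * (u t ^ 2 * exp (\<sigma> * t))) (at t within {a..b})"
    if "t \<in> {a..b}" for t \<sigma>
    using u'[OF that] by (auto intro!: derivative_eq_intros simp: algebra_simps power2_eq_square)
  have increasing: "u a ^ 2 * exp (2 * M * a) \<le> u b ^ 2 * exp (2 * M * b)"
  proof (rule has_real_derivative_nonneg_imp_le[OF assms(1) weighted_sq'])
    show "0 \<le> (2 * g t + 2 * M) * (u t ^ 2 * exp (2 * M * t))" if "t \<in> {a..b}" for t
      using g[OF that] by (intro mult_nonneg_nonneg) auto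
  qed
  have decreasing: "- (u a ^ 2 * exp (- 2 * M * a)) \<le> - (u b ^ 2 * exp (- 2 * M * b))"
  proof (rule has_real_derivative_nonneg_imp_le[OF assms(1) DERIV_minus[OF weighted_sq']])
    show "0 \<le> - ((2 * g t + - 2 * M) * (u t ^ 2 * exp (- 2 * M * t)))" if "t \<in> {a..b}" for t
      using g[OF that] by (simp add: mult_nonpos_nonneg)
  qed
  show ?thesis
  proof
    assume "u a = 0"
    then have "u b ^ 2 * exp (- 2 * M * b) \<le> 0"
      using decreasing by simp
    then show "u b = 0"
      by (simp add: mult_le_0_iff)
  next
    assume "u b = 0"
    then have "u a ^ 2 * exp (2 * M * a) \<le> 0"
      using increasing by simp
    then show "u a = 0"
      by (simp add: mult_le_0_iff)
  qed
qed

lemma tendsto_unique_zero_in_compact: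
  fixes f :: "'a \<Rightarrow> 'b::metric_space" and F :: "'b \<Rightarrow> 'c::real_normed_vector"
  assumes K: "compact K" "continuous_on K F" and zero: "\<And>z. z \<in> K \<Longrightarrow> F z = 0 \<Longrightarrow> z = p"
    and in_K: "eventually (\<lambda>t. f t \<in> K) net" and lim: "((\<lambda>t. F (f t)) \<longlongrightarrow> 0) net"
  shows "(f \<longlongrightarrow> p) net"
proof (rule tendstoI)
  fix \<epsilon> :: real
  assume "0 < \<epsilon>"
  define K' where "K' = K \<inter> {z. \<epsilon> \<le> dist z p}"
  have "compact K'"
    unfolding K'_def using K(1) by (intro compact_Int_closed closed_Collect_le continuous_intros)
  show "eventually (\<lambda>t. dist (f t) p < \<epsilon>) net"
  proof (cases "K' = {}")
    case True
    from in_K show ?thesis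
      by eventually_elim (use True in \<open>auto simp: K'_def\<close>)
  next
    case False
    then obtain z0 where "z0 \<in> K'" and min: "\<And>z. z \<in> K' \<Longrightarrow> norm (F z0) \<le> norm (F z)"
      using continuous_attains_inf[OF \<open>compact K'\<close> False, of "\<lambda>z. norm (F z)"] K(2)
      by (fastforce simp: K'_def intro: continuous_on_norm continuous_on_subset)
    then have "F z0 \<noteq> 0"
      using zero \<open>0 < \<epsilon>\<close> by (force simp: K'_def)
    then have "eventually (\<lambda>t. norm (F (f t)) < norm (F z0)) net"
      using tendsto_norm[OF lim] by (intro order_tendstoD(2)) auto
    with in_K show ?thesis
      by eventually_elim (use min in \<open>force simp: K'_def\<close>)
  qed
qed

lemma bounded_jumps_eventually_stop:
  fixes V :: "real \<Rightarrow> real"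
  assumes mono: "\<And>s t. 0 \<le> s \<Longrightarrow> s \<le> t \<Longrightarrow> V s \<le> V t"
    and bounded: "\<And>t. P t \<Longrightarrow> V t \<le> B"
    and jump: "\<And>t. P t \<Longrightarrow> h \<le> t \<Longrightarrow> V (t - h) + d \<le> V (t + l)"
    and "0 < d" "0 \<le> h" "0 \<le> l"
  shows "eventually (\<lambda>t. \<not> P t) at_top"
proof (rule ccontr)
  assume "\<not> eventually (\<lambda>t. \<not> P t) at_top"
  then have recurrent: "\<exists>t\<ge>T. P t" for T
    by (auto simp: eventually_at_top_linorder)
  have climb: "\<exists>T\<ge>0. V 0 + real n * d \<le> V T" for n
  proof (induction n)
    case 0
    then show ?case
      by auto
  next
    case (Suc n)
    then obtain T where "0 \<le> T" "V 0 + real n * d \<le> V T"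
      by blast
    moreover obtain t where "T + h \<le> t" "P t"
      using recurrent by blast
    ultimately have "V 0 + real (Suc n) * d \<le> V (t + l)" "0 \<le> t + l"
      using mono[of T "t - h"] jump[of t] assms(5,6) by (auto simp: algebra_simps)
    then show ?case
      by blast
  qed
  obtain n where "B - V 0 < real n * d"
    using reals_Archimedean3[OF \<open>0 < d\<close>] by blast
  moreover obtain T where "0 \<le> T" "V 0 + real n * d \<le> V T"
    using climb by blast
  moreover obtain t where "T \<le> t" "P t"
    using recurrent by blast
  ultimately show False
    using mono[of T t] bounded[of t] by simp
qed

lemma integral_shift_diff_le:
  fixes g :: "real \<Rightarrow> real"
  assumes g: "continuous_on {u..} g" "\<And>v. u \<le> v \<Longrightarrow> \<bar>g v\<bar> \<le> B" and "u \<le> 0" "0 \<le> T"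
  shows "\<bar>integral {u..T+u} g - integral {0..T} g\<bar> \<le> 2 * \<bar>u\<bar> * B"
proof -
  have integrable: "g integrable_on {a..b}" if "u \<le> a" for a b
    using that by (intro integrable_continuous_real continuous_on_subset[OF g(1)]) auto
  have split: "integral {a..c} g = integral {a..b} g + integral {b..c} g"
    if "u \<le> a" "a \<le> b" "b \<le> c" for a b c
    using that by (intro Henstock_Kurzweil_Integration.integral_combine[symmetric] integrable) auto
  have bound: "\<bar>integral {a..a-u} g\<bar> \<le> \<bar>u\<bar> * B" if "u \<le> a" for a
  proof -
    have "continuous_on {a..a-u} g"
      using that by (intro continuous_on_subset[OF g(1)]) auto
    then show ?thesis
      using integral_bound[of a "a - u" g B] that \<open>u \<le> 0\<close> g(2) by (simp add: mult.commute)
  qed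
  have "integral {u..T+u} g - integral {0..T} g = integral {u..0} g - integral {T+u..T} g"
  proof (cases "T + u \<le> 0")
    case True
    then show ?thesis
      using split[of u "T+u" 0] split[of "T+u" 0 T] assms by auto
  next
    case False
    then show ?thesis
      using split[of u 0 "T+u"] split[of 0 "T+u" T] assms by auto
  qed
  then show ?thesis
    using bound[of u] bound[of "T+u"] assms by auto
qed

lemma integrable_shifted_window_product:
  fixes g :: "real \<Rightarrow> real"
  assumes \<mu>: "finite_measure \<mu>" "sets \<mu> = sets borel" and g: "continuous_on UNIV g"
    and "a \<le> b"
  shows "integrable (lborel \<Otimes>\<^sub>M \<mu>) (\<lambda>p. indicator ({a..b} \<times> {c..d}) p * g (fst p + snd p))"
proof -
  interpret pair_sigma_finite lborel \<mu>
    using \<mu>(1) by (simp add: pair_sigma_finite_def lborel.sigma_finite_measure_axioms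
        finite_measure.sigma_finite_measure)
  define R where "R = {a..b} \<times> {c..d}"
  have R: "R \<in> sets (lborel \<Otimes>\<^sub>M \<mu>)"
    unfolding R_def by (rule pair_measureI) (auto simp: \<mu>(2))
  obtain C where C: "\<And>v. v \<in> {a+c..b+d} \<Longrightarrow> \<bar>g v\<bar> \<le> C"
    using compact_imp_bounded[OF compact_continuous_image[OF continuous_on_subset[OF g]]]
    by (fastforce simp: bounded_iff)
  have "emeasure (lborel \<Otimes>\<^sub>M \<mu>) R = ennreal (b - a) * emeasure \<mu> {c..d}"
    using M2.emeasure_pair_measure_Times[where N=lborel and A="{a..b}" and B="{c..d}"]
      \<mu>(2) \<open>a \<le> b\<close> by (simp add: R_def)
  then have "emeasure (lborel \<Otimes>\<^sub>M \<mu>) R < \<infinity>"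
    using finite_measure.emeasure_finite[OF \<mu>(1), of "{c..d}"]
      ennreal_mult_less_top[of "ennreal (b - a)" "emeasure \<mu> {c..d}"]
    by (auto simp: top.not_eq_extremum)
  then have bound_integrable: "integrable (lborel \<Otimes>\<^sub>M \<mu>) (\<lambda>p. C * indicator R p)"
    using R by (intro integrable_mult_right integrable_real_indicator)
  have measurable: "(\<lambda>p. indicator R p * g (fst p + snd p)) \<in> borel_measurable (lborel \<Otimes>\<^sub>M \<mu>)"
    using R \<mu>(2)
    by (intro borel_measurable_times borel_measurable_indicator
        measurable_compose[OF _ borel_measurable_continuous_onI[OF g]] borel_measurable_add
        measurable_compose[OF measurable_fst] measurable_compose[OF measurable_snd])
      (auto simp: measurable_ident_sets)
  have "norm (indicator R p * g (fst p + snd p)) \<le> norm (C * indicator R p)" for p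
  proof (cases "p \<in> R")
    case True
    then have "\<bar>g (fst p + snd p)\<bar> \<le> C"
      by (intro C) (auto simp: R_def)
    then show ?thesis
      using True by simp
  qed simp
  then show ?thesis
    unfolding R_def[symmetric] by (rule Bochner_Integration.integrable_bound[OF bound_integrable measurable AE_I2])
qed

lemma fubini_shifted_window:
  fixes g :: "real \<Rightarrow> real"
  assumes \<mu>: "finite_measure \<mu>" "sets \<mu> = sets borel" and g: "continuous_on UNIV g"
    and "a \<le> b"
  shows "integrable \<mu> (\<lambda>u. indicator {c..d} u * integral {a+u..b+u} g)"
    and "((\<lambda>s. \<integral>u. indicator {c..d} u * g (s + u) \<partial>\<mu>) has_integral
          (\<integral>u. indicator {c..d} u * integral {a+u..b+u} g \<partial>\<mu>)) {a..b}"
proof -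
  interpret pair_sigma_finite lborel \<mu>
    using \<mu>(1) by (simp add: pair_sigma_finite_def lborel.sigma_finite_measure_axioms
        finite_measure.sigma_finite_measure)
  define F where "F = (\<lambda>p :: real \<times> real. indicator ({a..b} \<times> {c..d}) p * g (fst p + snd p))"
  have "integrable (lborel \<Otimes>\<^sub>M \<mu>) F"
    unfolding F_def by (rule integrable_shifted_window_product[OF assms])
  then have F: "integrable (lborel \<Otimes>\<^sub>M \<mu>) (\<lambda>(s, u). F (s, u))"
    by simp
  have inner_s: "(\<integral>u. F (s, u) \<partial>\<mu>) = indicator {a..b} s * (\<integral>u. indicator {c..d} u * g (s + u) \<partial>\<mu>)"
    for s
    by (cases "s \<in> {a..b}") (simp_all add: F_def indicator_times)
  have inner_u: "(\<integral>s. F (s, u) \<partial>lborel) = indicator {c..d} u * integral {a+u..b+u} g" for u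
  proof -
    have "set_integrable lborel {a..b} (\<lambda>s. g (s + u))"
      unfolding set_integrable_def
      by (rule borel_integrable_compact) (auto intro!: continuous_on_compose2[OF g] continuous_intros)
    then have "(\<integral>s. indicator {a..b} s * g (s + u) \<partial>lborel) = integral {a..b} (\<lambda>s. g (s + u))"
      using set_borel_integral_eq_integral(2) by (fastforce simp: set_lebesgue_integral_def)
    also have "\<dots> = integral {a+u..b+u} g"
      using integral_shift_Icc_real[of a b g u] by (simp add: o_def add.commute)
    finally show ?thesis
      by (cases "u \<in> {c..d}") (simp_all add: F_def indicator_times)
  qed
  show "integrable \<mu> (\<lambda>u. indicator {c..d} u * integral {a+u..b+u} g)"
    using integrable_snd[OF F] inner_u by simp
  have h: "set_integrable lborel {a..b} (\<lambda>s. \<integral>u. indicator {c..d} u * g (s + u) \<partial>\<mu>)"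
    using integrable_fst[OF F] inner_s by (simp add: set_integrable_def)
  have "integral {a..b} (\<lambda>s. \<integral>u. indicator {c..d} u * g (s + u) \<partial>\<mu>)
      = (\<integral>s. indicator {a..b} s * (\<integral>u. indicator {c..d} u * g (s + u) \<partial>\<mu>) \<partial>lborel)"
    using set_borel_integral_eq_integral(2)[OF h] by (simp add: set_lebesgue_integral_def)
  also have "\<dots> = (\<integral>u. indicator {c..d} u * integral {a+u..b+u} g \<partial>\<mu>)"
    using Fubini_integral[OF F] by (simp add: inner_s inner_u)
  finally show "((\<lambda>s. \<integral>u. indicator {c..d} u * g (s + u) \<partial>\<mu>) has_integral
      (\<integral>u. indicator {c..d} u * integral {a+u..b+u} g \<partial>\<mu>)) {a..b}"
    using set_borel_integral_eq_integral(1)[OF h] by (simp add: has_integral_integrable_integral)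
qed

lemma fubini_delay_window:
  fixes g :: "real \<Rightarrow> real"
  assumes \<mu>: "finite_measure \<mu>" "sets \<mu> = sets borel" and g: "continuous_on {-r..} g"
    and "0 \<le> a" "a \<le> b"
  shows "integrable \<mu> (\<lambda>u. indicator {-r..0} u * integral {a+u..b+u} g)"
    and "((\<lambda>s. \<integral>u. indicator {-r..0} u * g (s + u) \<partial>\<mu>) has_integral
          (\<integral>u. indicator {-r..0} u * integral {a+u..b+u} g \<partial>\<mu>)) {a..b}"
proof -
  define g' where "g' v = g (max v (-r))" for v
  have "continuous_on UNIV g'"
    unfolding g'_def by (rule continuous_on_compose2[OF g]) (auto intro!: continuous_intros)
  note window = fubini_shifted_window[OF \<mu> this \<open>a \<le> b\<close>, of "-r" 0]
  have outer: "indicator {-r..0} u * integral {a+u..b+u} g' = indicator {-r..0} u * integral {a+u..b+u} g"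
    for u
    using \<open>0 \<le> a\<close> by (cases "u \<in> {-r..0}") (auto simp: g'_def intro!: integral_cong)
  have inner: "(\<integral>u. indicator {-r..0} u * g' (s + u) \<partial>\<mu>) = (\<integral>u. indicator {-r..0} u * g (s + u) \<partial>\<mu>)"
    if "s \<in> {a..b}" for s
    using that \<open>0 \<le> a\<close> by (intro Bochner_Integration.integral_cong) (auto simp: g'_def indicator_def)
  show "integrable \<mu> (\<lambda>u. indicator {-r..0} u * integral {a+u..b+u} g)"
    using window(1) by (simp add: outer)
  show "((\<lambda>s. \<integral>u. indicator {-r..0} u * g (s + u) \<partial>\<mu>) has_integral
      (\<integral>u. indicator {-r..0} u * integral {a+u..b+u} g \<partial>\<mu>)) {a..b}"
    using has_integral_eq[OF inner window(2)] by (simp add: outer)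
qed

section \<open>The simplex\<close>

lemma norm_le_1_if_prob_simplex: "z \<in> prob_simplex \<Longrightarrow> norm z \<le> 1"
  using norm_le_l1_cart[of z] by (simp add: prob_simplex_def)

lemma component_le_1_if_prob_simplex: "z \<in> prob_simplex \<Longrightarrow> z $ i \<le> 1"
  using member_le_sum[of i UNIV "\<lambda>k. z $ k"] by (simp add: prob_simplex_def)

lemma infdist_simplex_boundary_le:
  fixes z :: "real^'d"
  assumes z: "z \<in> prob_simplex"
  shows "infdist z simplex_boundary \<le> 2 * z $ i"
proof (cases "\<exists>j. j \<noteq> i")
  case False
  \<comment> \<open>a single strategy: the boundary is empty, and \<open>infdist\<close> to the empty set is \<open>0\<close>\<close>
  have "v \<notin> simplex_boundary" for v :: "real^'d"
  proof
    assume "v \<in> simplex_boundary"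
    then obtain k where "v $ k = 0" "(\<Sum>k\<in>UNIV. v $ k) = 1"
      by (auto simp: simplex_boundary_def prob_simplex_def)
    moreover have "UNIV = {k}"
      using False by (metis UNIV_eq_I singleton_iff)
    ultimately show False
      by (metis sum.insert_remove finite.emptyI sum.empty empty_Diff add_0 zero_neq_one)
  qed
  then have "simplex_boundary = ({} :: (real^'d) set)"
    by blast
  then show ?thesis
    using z by (simp add: infdist_def prob_simplex_def)
next
  case True
  then obtain j where "j \<noteq> i" by blast
  define w where "w = z + z $ i *\<^sub>R (axis j 1 - axis i 1)"
  have w: "w $ k = z $ k + z $ i * ((if k = j then 1 else 0) - (if k = i then 1 else 0))" for k
    by (simp add: w_def axis_def)
  have "w \<in> simplex_boundary"
    unfolding simplex_boundary_def prob_simplex_def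
  proof (intro CollectI conjI allI exI)
    show "0 \<le> w $ k" for k
      using z \<open>j \<noteq> i\<close> by (auto simp: w prob_simplex_def)
    show "w $ i = 0"
      using \<open>j \<noteq> i\<close> by (simp add: w)
    show "(\<Sum>k\<in>UNIV. w $ k) = 1"
      using z by (simp add: w sum.distrib sum_subtractf prob_simplex_def flip: sum_distrib_left)
  qed
  then have "infdist z simplex_boundary \<le> norm (z $ i *\<^sub>R (axis j (1::real) - axis i 1))"
    using infdist_le[of w simplex_boundary z] by (simp add: w_def dist_norm)
  also have "\<dots> \<le> z $ i * (norm (axis j (1::real)) + norm (axis i (1::real)))"
    using z norm_triangle_ineq4[of "axis j (1::real)" "axis i 1"]
    by (simp add: prob_simplex_def mult_left_mono)
  finally show ?thesis
    by simp
qed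

lemma component_ge_near_far_point:
  assumes z: "z \<in> prob_simplex" and far: "\<epsilon> \<le> infdist z simplex_boundary"
    and near: "norm (y - z) \<le> \<epsilon> / 4"
  shows "\<epsilon> / 4 \<le> y $ k"
proof -
  have "\<epsilon> / 2 \<le> z $ k"
    using infdist_simplex_boundary_le[OF z, of k] far by linarith
  moreover have "\<bar>y $ k - z $ k\<bar> \<le> \<epsilon> / 4"
    using component_le_norm_cart[of "y - z" k] near by simp
  ultimately show ?thesis
    by linarith
qed

lemma norm_rep_field_le:
  assumes z: "z \<in> prob_simplex"
  shows "norm (rep_field A z y) \<le> 2 * norm (A *v y)"
proof -
  have "\<bar>rep_field A z y $ i\<bar> \<le> z $ i * (2 * norm (A *v y))" for i
  proof -
    have "\<bar>(A *v y) $ i\<bar> \<le> norm (A *v y)"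
      by (rule component_le_norm_cart)
    moreover have "\<bar>z \<bullet> (A *v y)\<bar> \<le> norm (A *v y)"
      using Cauchy_Schwarz_ineq2[of z "A *v y"] norm_le_1_if_prob_simplex[OF z]
      by (meson mult_left_le_one_le norm_ge_zero order_trans)
    ultimately show ?thesis
      using z by (auto simp: rep_field_def abs_mult prob_simplex_def intro!: mult_left_mono)
  qed
  then have "norm (rep_field A z y) \<le> (\<Sum>i\<in>UNIV. z $ i * (2 * norm (A *v y)))"
    by (intro order_trans[OF norm_le_l1_cart] sum_mono)
  also have "\<dots> = 2 * norm (A *v y)"
    using z by (simp add: prob_simplex_def flip: sum_distrib_right)
  finally show ?thesis .
qed

lemma abs_ln_le_abs_ln:
  fixes \<eta> y :: real
  assumes "0 < \<eta>" "\<eta> \<le> y" "y \<le> 1"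
  shows "\<bar>ln y\<bar> \<le> \<bar>ln \<eta>\<bar>"
proof -
  have "ln \<eta> \<le> ln y"
    using assms by (intro ln_mono) auto
  moreover have "ln y \<le> 0"
    using assms by (subst ln_le_zero_iff) auto
  ultimately show ?thesis
    by (simp add: abs_if)
qed

lemma compact_simplex_bounded_below:
  fixes \<eta> :: real
  assumes "0 \<le> \<eta>"
  shows "compact {z :: real^'d. (\<forall>k. \<eta> \<le> z $ k) \<and> (\<Sum>k\<in>UNIV. z $ k) = 1}"
proof -
  have "{z :: real^'d. (\<forall>k. \<eta> \<le> z $ k) \<and> (\<Sum>k\<in>UNIV. z $ k) = 1} \<subseteq> prob_simplex"
    using assms by (auto simp: prob_simplex_def intro: order_trans)
  then have "bounded {z :: real^'d. (\<forall>k. \<eta> \<le> z $ k) \<and> (\<Sum>k\<in>UNIV. z $ k) = 1}"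
    using norm_le_1_if_prob_simplex by (auto simp: bounded_iff)
  moreover have "closed {z :: real^'d. (\<forall>k. \<eta> \<le> z $ k) \<and> (\<Sum>k\<in>UNIV. z $ k) = 1}"
    by (intro closed_Collect_conj closed_Collect_all closed_Collect_le closed_Collect_eq
        continuous_intros)
  ultimately show ?thesis
    by (simp add: compact_eq_bounded_closed)
qed

definition weighted_log :: "real^'d \<Rightarrow> real^'d \<Rightarrow> real" where
  "weighted_log c z = (\<Sum>i\<in>UNIV. c $ i * ln (z $ i))"

lemma abs_weighted_log_le:
  assumes "0 < \<eta>" "\<And>i. \<eta> \<le> z $ i" "\<And>i. z $ i \<le> 1"
  shows "\<bar>weighted_log c z\<bar> \<le> (\<Sum>i\<in>UNIV. \<bar>c $ i\<bar>) * \<bar>ln \<eta>\<bar>"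
proof -
  have "\<bar>weighted_log c z\<bar> \<le> (\<Sum>i\<in>UNIV. \<bar>c $ i\<bar> * \<bar>ln (z $ i)\<bar>)"
    unfolding weighted_log_def by (rule order_trans[OF sum_abs]) (simp add: abs_mult)
  also have "\<dots> \<le> (\<Sum>i\<in>UNIV. \<bar>c $ i\<bar> * \<bar>ln \<eta>\<bar>)"
    using assms by (intro sum_mono mult_left_mono abs_ln_le_abs_ln) auto
  finally show ?thesis
    by (simp add: sum_distrib_right)
qed

section \<open>Separation from the positive orthant\<close>

lemma transpose_mult_inner: "(transpose A *v c) \<bullet> z = c \<bullet> (A *v z)"
  for A :: "real^'n^'m"
  by (simp add: transpose_matrix_vector dot_lmul_matrix)

lemma payoff_difference_eq_inner:
  "(A *v z) $ i - (A *v z) $ j = (transpose A *v (axis i 1 - axis j 1)) \<bullet> z"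
  unfolding transpose_mult_inner by (simp add: inner_diff_left inner_axis')

lemma interior_equilibrium_normalize:
  fixes A :: "real^'d^'d"
  assumes pos: "\<And>i. 0 < z $ i" and const: "\<And>i j. (A *v z) $ i = (A *v z) $ j"
  shows "interior_equilibrium A ((1 / (\<Sum>i\<in>UNIV. z $ i)) *\<^sub>R z)"
proof -
  have "0 < (\<Sum>i\<in>UNIV. z $ i)"
    using pos by (intro sum_pos) auto
  then show ?thesis
    using pos const
    by (simp add: interior_equilibrium_def simplex_interior_def matrix_vector_mult_scaleR
        flip: sum_divide_distrib)
qed

lemma subspace_avoiding_positive_orthant:
  fixes S :: "(real^'n) set"
  assumes S: "subspace S" and avoid: "\<And>z. z \<in> S \<Longrightarrow> \<exists>i. z $ i \<le> 0"
  obtains a where "a \<noteq> 0" "\<And>i. 0 \<le> a $ i" "\<And>z. z \<in> S \<Longrightarrow> a \<bullet> z = 0"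
proof -
  define P where "P = {z :: real^'n. \<forall>i. 0 < z $ i}"
  have "convex P"
    unfolding P_def convex_def
    by (auto intro: add_pos_nonneg add_nonneg_pos simp: less_eq_real_def)
  moreover have "S \<inter> P = {}"
    unfolding P_def using avoid by (metis (mono_tags) disjoint_iff mem_Collect_eq not_le)
  moreover have "(\<chi> i. 1) \<in> P"
    by (simp add: P_def)
  ultimately obtain a b where "a \<noteq> 0" and below: "\<And>z. z \<in> S \<Longrightarrow> a \<bullet> z \<le> b"
    and above: "\<And>z. z \<in> P \<Longrightarrow> b \<le> a \<bullet> z"
    using separating_hyperplane_sets[OF subspace_imp_convex[OF S], of P] subspace_0[OF S] by blast
  have orth: "a \<bullet> z = 0" if "z \<in> S" for z
  proof (rule ccontr)
    assume "a \<bullet> z \<noteq> 0"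
    then have "a \<bullet> (((\<bar>b\<bar> + 1) / (a \<bullet> z)) *\<^sub>R z) = \<bar>b\<bar> + 1"
      by simp
    moreover have "((\<bar>b\<bar> + 1) / (a \<bullet> z)) *\<^sub>R z \<in> S"
      using S that by (rule subspace_scale)
    ultimately show False
      using below by fastforce
  qed
  have "0 \<le> a $ i" for i
  proof (rule ccontr)
    assume "\<not> 0 \<le> a $ i"
    define t where "t = (\<bar>a \<bullet> (\<chi> j. 1)\<bar> + 1) / (- a $ i)"
    have "0 < t"
      using \<open>\<not> 0 \<le> a $ i\<close> unfolding t_def by (intro divide_pos_pos) auto
    then have "(\<chi> j. 1) + t *\<^sub>R axis i 1 \<in> P"
      by (simp add: P_def axis_def)
    then have "b \<le> a \<bullet> ((\<chi> j. 1) + t *\<^sub>R axis i 1)"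
      by (rule above)
    then have "b \<le> a \<bullet> (\<chi> j. 1) + t * a $ i"
      by (simp add: inner_add_right inner_axis)
    moreover have "t * a $ i = - (\<bar>a \<bullet> (\<chi> j. 1)\<bar> + 1)"
      using \<open>\<not> 0 \<le> a $ i\<close> by (simp add: t_def)
    moreover have "0 \<le> b"
      using below[OF subspace_0[OF S]] by simp
    ultimately show False
      by linarith
  qed
  then show ?thesis
    using that \<open>a \<noteq> 0\<close> orth by blast
qed

lemma orthogonal_constant_payoffs_imp_range:
  fixes A :: "real^'n^'n"
  assumes orth: "\<And>z. (\<forall>i j. (A *v z) $ i = (A *v z) $ j) \<Longrightarrow> a \<bullet> z = 0"
  obtains c where "(\<Sum>i\<in>UNIV. c $ i) = 0" "a = transpose A *v c"
proof -
  define V where "V = (\<lambda>c. transpose A *v c) ` {c. (\<Sum>i\<in>UNIV. c $ i) = 0}"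
  have "subspace V"
    unfolding V_def
    by (intro linear_subspace_image linear_subspace_kernel)
      (auto intro!: linearI simp: matrix_vector_right_distrib matrix_vector_mult_scaleR
        sum.distrib sum_distrib_left)
  obtain y w where "y \<in> span V" and w: "\<And>v. v \<in> span V \<Longrightarrow> orthogonal w v" and "a = y + w"
    using orthogonal_subspace_decomp_exists[of V a] by metis
  have "(A *v w) $ i = (A *v w) $ j" for i j
  proof -
    have "transpose A *v (axis i 1 - axis j 1) \<in> V"
      unfolding V_def by (rule imageI) (simp add: sum_subtractf axis_def)
    then have "w \<bullet> (transpose A *v (axis i 1 - axis j 1)) = 0"
      using w span_superset by (auto simp: orthogonal_def)
    then show ?thesis
      using payoff_difference_eq_inner[of A w i j] by (simp add: inner_commute)
  qed
  then have "a \<bullet> w = 0"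
    using orth by blast
  moreover have "y \<bullet> w = 0"
    using w[OF \<open>y \<in> span V\<close>] by (simp add: orthogonal_def inner_commute)
  ultimately have "w = 0"
    using \<open>a = y + w\<close> by (simp add: inner_add_left)
  then have "a \<in> V"
    using \<open>a = y + w\<close> \<open>y \<in> span V\<close> \<open>subspace V\<close>
    by (metis add.right_neutral span_eq_iff real_vector.span_eq_iff)
  then show ?thesis
    using that by (auto simp: V_def)
qed

lemma no_interior_equilibrium_imp_separating_weights:
  fixes A :: "real^'d^'d"
  assumes "\<nexists>p. interior_equilibrium A p"
  obtains c where "(\<Sum>i\<in>UNIV. c $ i) = 0" "\<And>i. 0 \<le> (transpose A *v c) $ i"
    "transpose A *v c \<noteq> 0"
proof -
  define K where "K = {z :: real^'d. \<forall>i j. (A *v z) $ i = (A *v z) $ j}"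
  have "subspace K"
    unfolding K_def subspace_def
    by (simp add: matrix_vector_right_distrib matrix_vector_mult_scaleR) metis
  moreover have "\<exists>i. z $ i \<le> 0" if "z \<in> K" for z
    using assms interior_equilibrium_normalize[of z A] that by (force simp: K_def not_le)
  ultimately obtain a where "a \<noteq> 0" "\<And>i. 0 \<le> a $ i" "\<And>z. z \<in> K \<Longrightarrow> a \<bullet> z = 0"
    using subspace_avoiding_positive_orthant by blast
  moreover obtain c where "(\<Sum>i\<in>UNIV. c $ i) = 0" "a = transpose A *v c"
    using orthogonal_constant_payoffs_imp_range \<open>\<And>z. z \<in> K \<Longrightarrow> a \<bullet> z = 0\<close>
    unfolding K_def by blast
  ultimately show ?thesis
    using that by blast
qed

section \<open>Solutions of the distributed-delay equation\<close>

lemma delayed_replicator_solution_imp_distributed: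
  assumes "0 < r" and sol: "delayed_replicator_solution A r x"
  shows "distributed_replicator_solution A r (return borel (-r)) x"
proof -
  have "continuous_on {-r..} x"
    using sol by (simp add: delayed_replicator_solution_def)
  have "(\<integral>s. indicator {-r..0} s *\<^sub>R x (t + s) \<partial>return borel (-r)) = x (t - r)" if "0 \<le> t" for t
  proof -
    have "continuous_on {-r..0} (\<lambda>s. x (t + s))"
      using that by (intro continuous_on_compose2[OF \<open>continuous_on {-r..} x\<close>])
        (auto intro!: continuous_intros)
    then have "(\<lambda>s. indicator {-r..0} s *\<^sub>R x (t + s)) \<in> borel_measurable borel"
      by (intro borel_measurable_continuous_on_indicator) auto
    from integral_return[OF _ this, of "-r"] show ?thesis
      using assms(1) by simp
  qed
  then show ?thesis
    using sol assms(1)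
    by (auto simp: delayed_replicator_solution_def distributed_replicator_solution_def
        prob_space_return measure_return)
qed

locale distributed_replicator =
  fixes A :: "real^'d^'d" and r :: real and \<mu> :: "real measure" and x :: "real \<Rightarrow> real^'d"
  assumes delay_pos: "0 < r" and solution: "distributed_replicator_solution A r \<mu> x"
begin

definition xbar :: "real \<Rightarrow> real^'d" where
  "xbar t = (\<integral>s. indicator {-r..0} s *\<^sub>R x (t + s) \<partial>\<mu>)"

lemma prob_space_\<mu>: "prob_space \<mu>"
  and sets_\<mu>: "sets \<mu> = sets borel"
  and measure_delay_window: "measure \<mu> {-r..0} = 1"
  and continuous_x: "continuous_on {-r..} x"
  and initial_in_simplex: "t \<in> {-r..0} \<Longrightarrow> x t \<in> prob_simplex"
  and has_vector_derivative_x: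
    "0 \<le> t \<Longrightarrow> (x has_vector_derivative rep_field A (x t) (xbar t)) (at t within {0..})"
  using solution by (auto simp: distributed_replicator_solution_def xbar_def)

lemma AE_delay_window: "AE u in \<mu>. u \<in> {-r..0}"
  by (rule prob_space.AE_prob_1[OF prob_space_\<mu> measure_delay_window])

lemma bounded_x:
  obtains B where "0 \<le> B" "\<And>v. v \<in> {-r..T} \<Longrightarrow> norm (x v) \<le> B"
proof -
  have "compact (x ` {-r..T})"
    by (intro compact_continuous_image continuous_on_subset[OF continuous_x]) auto
  then obtain B where "\<And>v. v \<in> {-r..T} \<Longrightarrow> norm (x v) \<le> B"
    using compact_imp_bounded by (fastforce simp: bounded_iff)
  then show ?thesis
    using that[of "max B 0"] by fastforce
qed

lemma integrable_delay_window:
  assumes "0 \<le> t"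
  shows "integrable \<mu> (\<lambda>s. indicator {-r..0} s *\<^sub>R x (t + s))"
proof -
  obtain B where B: "0 \<le> B" "\<And>v. v \<in> {-r..t} \<Longrightarrow> norm (x v) \<le> B"
    using bounded_x by blast
  have "continuous_on {-r..0} (\<lambda>s. x (t + s))"
    using assms by (intro continuous_on_compose2[OF continuous_x]) (auto intro!: continuous_intros)
  then have "(\<lambda>s. indicator {-r..0} s *\<^sub>R x (t + s)) \<in> borel_measurable borel"
    by (intro borel_measurable_continuous_on_indicator) auto
  then have "(\<lambda>s. indicator {-r..0} s *\<^sub>R x (t + s)) \<in> borel_measurable \<mu>"
    using measurable_cong_sets[OF sets_\<mu> refl] by blast
  then show ?thesis
    using B assms
    by (intro finite_measure.integrable_const_bound[OF prob_space.finite_measure[OF prob_space_\<mu>]]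
        AE_I2) (auto simp: indicator_def)
qed

lemma inner_xbar:
  "0 \<le> t \<Longrightarrow> w \<bullet> xbar t = (\<integral>s. indicator {-r..0} s * (w \<bullet> x (t + s)) \<partial>\<mu>)"
  using integral_bounded_linear[OF bounded_linear_inner_right integrable_delay_window, of t w]
  by (simp add: xbar_def)

lemma norm_xbar_le:
  assumes "0 \<le> t" "0 \<le> B" "\<And>v. v \<in> {t-r..t} \<Longrightarrow> norm (x v) \<le> B"
  shows "norm (xbar t) \<le> B"
proof -
  have "norm (xbar t) \<le> (\<integral>s. norm (indicator {-r..0} s *\<^sub>R x (t + s)) \<partial>\<mu>)"
    unfolding xbar_def by (rule integral_norm_bound)
  also have "\<dots> \<le> B"
    using assms integrable_norm[OF integrable_delay_window[OF assms(1)]]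
    by (intro prob_space.integral_le_const[OF prob_space_\<mu>] AE_I2) (auto simp: indicator_def)
  finally show ?thesis .
qed

lemma component_has_derivative:
  assumes "0 \<le> t"
  shows "((\<lambda>t. x t $ i) has_real_derivative
      x t $ i * ((A *v xbar t) $ i - x t \<bullet> (A *v xbar t))) (at t within {0..})"
  using bounded_linear.has_vector_derivative[OF bounded_linear_vec_nth has_vector_derivative_x[OF assms]]
  by (simp add: has_real_derivative_iff_has_vector_derivative rep_field_def)

lemma growth_rates_bounded:
  obtains M where "\<And>t i. t \<in> {0..T} \<Longrightarrow> \<bar>(A *v xbar t) $ i - x t \<bullet> (A *v xbar t)\<bar> \<le> M"
    and "\<And>t. t \<in> {0..T} \<Longrightarrow> \<bar>x t \<bullet> (A *v xbar t)\<bar> \<le> M"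
proof -
  obtain B where B: "0 \<le> B" "\<And>v. v \<in> {-r..T} \<Longrightarrow> norm (x v) \<le> B"
    using bounded_x by blast
  define K where "K = onorm ((*v) A)"
  have "0 \<le> K"
    unfolding K_def by (rule onorm_pos_le[OF matrix_vector_mul_bounded_linear])
  have payoff: "norm (A *v xbar t) \<le> K * B" if "t \<in> {0..T}" for t
  proof -
    have "norm (xbar t) \<le> B"
      using that delay_pos by (intro norm_xbar_le B) auto
    then show ?thesis
      using onorm[OF matrix_vector_mul_bounded_linear, of A "xbar t"] \<open>0 \<le> K\<close>
      unfolding K_def by (meson mult_left_mono order_trans)
  qed
  have mean: "\<bar>x t \<bullet> (A *v xbar t)\<bar> \<le> B * (K * B)" if "t \<in> {0..T}" for t
  proof (rule order_trans[OF Cauchy_Schwarz_ineq2 mult_mono])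
    show "norm (x t) \<le> B"
      using B(2) that delay_pos by auto
  qed (use payoff[OF that] B(1) in auto)
  have "\<bar>(A *v xbar t) $ i - x t \<bullet> (A *v xbar t)\<bar> \<le> K * B + B * (K * B)" if "t \<in> {0..T}" for t i
    using abs_triangle_ineq4[of "(A *v xbar t) $ i" "x t \<bullet> (A *v xbar t)"]
      component_le_norm_cart[of "A *v xbar t" i] payoff[OF that] mean[OF that]
    by linarith
  moreover have "\<bar>x t \<bullet> (A *v xbar t)\<bar> \<le> K * B + B * (K * B)" if "t \<in> {0..T}" for t
    using mean[OF that] \<open>0 \<le> K\<close> B(1) by (simp add: add_increasing)
  ultimately show ?thesis
    using that by blast
qed

lemma sum_x_eq_1:
  assumes "0 \<le> T"
  shows "(\<Sum>i\<in>UNIV. x T $ i) = 1"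
proof -
  obtain M where M: "\<And>t. t \<in> {0..T} \<Longrightarrow> \<bar>x t \<bullet> (A *v xbar t)\<bar> \<le> M"
    using growth_rates_bounded by metis
  define u where "u t = 1 - (\<Sum>i\<in>UNIV. x t $ i)" for t
  have u': "(u has_real_derivative u t * - (x t \<bullet> (A *v xbar t))) (at t within {0..T})"
    if "t \<in> {0..T}" for t
  proof -
    have "(u has_real_derivative
        0 - (\<Sum>i\<in>UNIV. x t $ i * ((A *v xbar t) $ i - x t \<bullet> (A *v xbar t)))) (at t within {0..})"
      unfolding u_def using that by (intro DERIV_diff DERIV_const DERIV_sum component_has_derivative) auto
    moreover have "0 - (\<Sum>i\<in>UNIV. x t $ i * ((A *v xbar t) $ i - x t \<bullet> (A *v xbar t)))
        = u t * - (x t \<bullet> (A *v xbar t))"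
      by (simp add: u_def algebra_simps sum_subtractf sum_distrib_right inner_vec_def)
    ultimately show ?thesis
      by (auto intro: DERIV_subset)
  qed
  have "u 0 = 0"
    using initial_in_simplex[of 0] delay_pos by (simp add: u_def prob_simplex_def)
  then have "u T = 0"
    using linear_ode_zero_iff[OF assms u', of M] M by simp
  then show ?thesis
    by (simp add: u_def)
qed

lemma component_eq_0_iff:
  assumes "0 \<le> T"
  shows "x T $ i = 0 \<longleftrightarrow> x 0 $ i = 0"
proof -
  obtain M where M: "\<And>t i. t \<in> {0..T} \<Longrightarrow> \<bar>(A *v xbar t) $ i - x t \<bullet> (A *v xbar t)\<bar> \<le> M"
    using growth_rates_bounded by metis
  have x': "((\<lambda>t. x t $ i) has_real_derivative
      x t $ i * ((A *v xbar t) $ i - x t \<bullet> (A *v xbar t))) (at t within {0..T})"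
    if "t \<in> {0..T}" for t
    using component_has_derivative[of t i] that by (auto intro: DERIV_subset)
  show ?thesis
    using linear_ode_zero_iff[OF assms x' M] by auto
qed

lemma component_pos:
  assumes "0 \<le> T" "0 < x 0 $ i"
  shows "0 < x T $ i"
proof (rule ccontr)
  assume "\<not> 0 < x T $ i"
  moreover have "continuous_on {0..T} (\<lambda>t. x t $ i)"
    using delay_pos by (intro continuous_on_component continuous_on_subset[OF continuous_x]) auto
  ultimately obtain t where "0 \<le> t" "t \<le> T" "x t $ i = 0"
    using IVT2'[of "\<lambda>t. x t $ i" T 0 0] assms by force
  then show False
    using component_eq_0_iff[of t i] assms(2) by simp
qed

lemma x_in_simplex:
  assumes "-r \<le> t"
  shows "x t \<in> prob_simplex"
proof (cases "0 \<le> t")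
  case True
  have "0 \<le> x t $ i" for i
  proof -
    have "0 \<le> x 0 $ i"
      using initial_in_simplex[of 0] delay_pos by (simp add: prob_simplex_def)
    then show ?thesis
      using component_pos[OF True, of i] component_eq_0_iff[OF True, of i]
      by (cases "x 0 $ i = 0") auto
  qed
  then show ?thesis
    using sum_x_eq_1[OF True] by (simp add: prob_simplex_def)
next
  case False
  then show ?thesis
    using assms initial_in_simplex by simp
qed

lemma norm_xbar_le_1:
  assumes "0 \<le> t"
  shows "norm (xbar t) \<le> 1"
proof (rule norm_xbar_le[OF assms])
  show "norm (x v) \<le> 1" if "v \<in> {t-r..t}" for v
    using that assms by (intro norm_le_1_if_prob_simplex x_in_simplex) auto
qed simp

lemma lipschitz_x:
  assumes "0 \<le> s" "0 \<le> t"
  shows "norm (x t - x s) \<le> 2 * onorm ((*v) A) * \<bar>t - s\<bar>"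
proof -
  have "onorm (\<lambda>h. h *\<^sub>R rep_field A (x \<tau>) (xbar \<tau>)) \<le> 2 * onorm ((*v) A)"
    if "\<tau> \<in> {0..}" for \<tau>
  proof -
    have "norm (rep_field A (x \<tau>) (xbar \<tau>)) \<le> 2 * norm (A *v xbar \<tau>)"
      using that delay_pos by (intro norm_rep_field_le x_in_simplex) auto
    also have "\<dots> \<le> 2 * onorm ((*v) A)"
      using onorm[OF matrix_vector_mul_bounded_linear, of A "xbar \<tau>"] norm_xbar_le_1[of \<tau>] that
        onorm_pos_le[OF matrix_vector_mul_bounded_linear[of A]]
      by (simp add: mult_left_le order_trans)
    finally show ?thesis
      by (simp add: onorm_scaleR_left[OF bounded_linear_ident] onorm_id)
  qed
  then have "norm (x t - x s) \<le> 2 * onorm ((*v) A) * norm (t - s)"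
    using has_vector_derivative_x assms
    by (intro differentiable_bound[where S="{0..}"]) (auto simp: has_vector_derivative_def)
  then show ?thesis
    by simp
qed

lemma ln_component_has_derivative:
  assumes "0 \<le> t" "0 < x t $ i"
  shows "((\<lambda>t. ln (x t $ i)) has_real_derivative
      (A *v xbar t) $ i - x t \<bullet> (A *v xbar t)) (at t within {0..})"
  by (rule DERIV_cong[OF DERIV_chain2[OF DERIV_ln_divide[OF assms(2)]
        component_has_derivative[OF assms(1)]]])
    (use assms(2) in simp)

lemma integrable_inner_x: "-r \<le> a \<Longrightarrow> (\<lambda>v. w \<bullet> x v) integrable_on {a..b}"
  by (intro integrable_continuous_real continuous_on_subset[OF continuous_x] continuous_intros) auto

lemma inner_x_nonneg: "(\<And>k. 0 \<le> a $ k) \<Longrightarrow> -r \<le> v \<Longrightarrow> 0 \<le> a \<bullet> x v"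
  using x_in_simplex[of v] by (auto simp: inner_vec_def prob_simplex_def intro!: sum_nonneg)

lemma abs_inner_x_le: "-r \<le> v \<Longrightarrow> \<bar>w \<bullet> x v\<bar> \<le> norm w"
  using Cauchy_Schwarz_ineq2[of w "x v"] norm_le_1_if_prob_simplex[OF x_in_simplex, of v]
  by (meson mult_left_le norm_ge_zero order_trans)

lemma
  assumes "0 \<le> a" "a \<le> b"
  shows integrable_delay_integral:
      "integrable \<mu> (\<lambda>u. indicator {-r..0} u * integral {a+u..b+u} (\<lambda>v. w \<bullet> x v))"
    and has_integral_inner_xbar: "((\<lambda>s. w \<bullet> xbar s) has_integral
      (\<integral>u. indicator {-r..0} u * integral {a+u..b+u} (\<lambda>v. w \<bullet> x v) \<partial>\<mu>)) {a..b}"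
proof -
  have "continuous_on {-r..} (\<lambda>v. w \<bullet> x v)"
    using continuous_x by (intro continuous_intros)
  note window = fubini_delay_window[OF prob_space.finite_measure[OF prob_space_\<mu>] sets_\<mu> this assms]
  show "integrable \<mu> (\<lambda>u. indicator {-r..0} u * integral {a+u..b+u} (\<lambda>v. w \<bullet> x v))"
    by (rule window(1))
  show "((\<lambda>s. w \<bullet> xbar s) has_integral
      (\<integral>u. indicator {-r..0} u * integral {a+u..b+u} (\<lambda>v. w \<bullet> x v) \<partial>\<mu>)) {a..b}"
    using assms by (intro has_integral_eq[OF _ window(2)]) (simp add: inner_xbar)
qed

text \<open>Averaging over the delay changes the integral of \<open>w \<bullet> x\<close> over \<open>[0, T]\<close> only by
  boundary terms of length at most \<open>r\<close> at either end.\<close>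

lemma delay_integral_approx:
  assumes "0 \<le> T"
  shows "\<bar>(\<integral>u. indicator {-r..0} u * integral {u..T+u} (\<lambda>v. w \<bullet> x v) \<partial>\<mu>)
      - integral {0..T} (\<lambda>v. w \<bullet> x v)\<bar> \<le> 2 * r * norm w"
proof -
  interpret prob_space \<mu>
    by (rule prob_space_\<mu>)
  define I where "I u = integral {u..T+u} (\<lambda>v. w \<bullet> x v)" for u
  have bound: "\<bar>indicator {-r..0} u * (I u - I 0)\<bar> \<le> 2 * r * norm w" for u
  proof (cases "u \<in> {-r..0}")
    case True
    then have "\<bar>integral {u..T+u} (\<lambda>v. w \<bullet> x v) - integral {0..T} (\<lambda>v. w \<bullet> x v)\<bar>
        \<le> 2 * \<bar>u\<bar> * norm w"
      using assms abs_inner_x_le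
      by (intro integral_shift_diff_le continuous_on_subset[OF continuous_x] continuous_intros) auto
    then have "\<bar>I u - I 0\<bar> \<le> 2 * \<bar>u\<bar> * norm w"
      by (simp add: I_def)
    also have "\<dots> \<le> 2 * r * norm w"
      using True by (intro mult_right_mono) auto
    finally show ?thesis
      using True by simp
  qed (use delay_pos in simp)
  have "integrable \<mu> (\<lambda>u. indicator {-r..0} u * I u)"
    using integrable_delay_integral[OF order_refl assms, of w] by (simp add: I_def)
  moreover have "integrable \<mu> (\<lambda>u. indicator {-r..0} u * I 0)"
    using sets_\<mu>
    by (intro integrable_mult_left integrable_real_indicator) (auto simp: less_top[symmetric])
  moreover have "(\<integral>u. indicator {-r..0} u * I 0 \<partial>\<mu>) = I 0"
    using measure_delay_window sets_eq_imp_space_eq[OF sets_\<mu>] by simp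
  ultimately have integrable: "integrable \<mu> (\<lambda>u. indicator {-r..0} u * (I u - I 0))"
    and split: "(\<integral>u. indicator {-r..0} u * I u \<partial>\<mu>) - I 0
      = (\<integral>u. indicator {-r..0} u * (I u - I 0) \<partial>\<mu>)"
    by (simp_all add: right_diff_distrib)
  have "\<bar>\<integral>u. indicator {-r..0} u * (I u - I 0) \<partial>\<mu>\<bar>
      \<le> (\<integral>u. \<bar>indicator {-r..0} u * (I u - I 0)\<bar> \<partial>\<mu>)"
    using integral_norm_bound[of \<mu> "\<lambda>u. indicator {-r..0} u * (I u - I 0)"] by simp
  also have "\<dots> \<le> 2 * r * norm w"
    using bound integrable by (intro integral_le_const AE_I2) auto
  finally show ?thesis
    using split by (simp add: I_def)
qed

lemma weighted_log_increment:
  assumes "(\<Sum>i\<in>UNIV. c $ i) = 0" "\<And>i. 0 < x 0 $ i" "0 \<le> \<alpha>" "\<alpha> \<le> \<beta>"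
  shows "weighted_log c (x \<beta>) - weighted_log c (x \<alpha>)
    = (\<integral>u. indicator {-r..0} u * integral {\<alpha>+u..\<beta>+u} (\<lambda>v. (transpose A *v c) \<bullet> x v) \<partial>\<mu>)"
proof -
  have "((\<lambda>t. weighted_log c (x t)) has_vector_derivative (transpose A *v c) \<bullet> xbar t)
      (at t within {\<alpha>..\<beta>})" if "t \<in> {\<alpha>..\<beta>}" for t
  proof -
    have "0 \<le> t"
      using that assms by auto
    then have "0 < x t $ i" for i
      using component_pos assms(2) by blast
    with \<open>0 \<le> t\<close> have "((\<lambda>t. weighted_log c (x t)) has_real_derivative
        (\<Sum>i\<in>UNIV. c $ i * ((A *v xbar t) $ i - x t \<bullet> (A *v xbar t)))) (at t within {0..})"
      unfolding weighted_log_def by (intro DERIV_sum DERIV_cmult ln_component_has_derivative)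
    moreover have "(\<Sum>i\<in>UNIV. c $ i * ((A *v xbar t) $ i - x t \<bullet> (A *v xbar t)))
        = c \<bullet> (A *v xbar t)"
      using assms(1)
      by (simp add: algebra_simps sum_subtractf inner_vec_def flip: sum_distrib_right)
    ultimately have "((\<lambda>t. weighted_log c (x t)) has_real_derivative c \<bullet> (A *v xbar t))
        (at t within {\<alpha>..\<beta>})"
      using assms by (auto intro: DERIV_subset)
    then show ?thesis
      by (simp only: transpose_mult_inner has_real_derivative_iff_has_vector_derivative)
  qed
  from fundamental_theorem_of_calculus[OF assms(4) this]
  show ?thesis
    using has_integral_unique has_integral_inner_xbar[OF assms(3,4)] by blast
qed

lemma x_in_boundary_if_face:
  assumes "x 0 $ i = 0" "0 \<le> t"
  shows "x t \<in> simplex_boundary"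
  using assms component_eq_0_iff[of t i] x_in_simplex[of t] delay_pos
  by (auto simp: simplex_boundary_def)

lemma delay_integral_nonneg:
  assumes "\<And>k. 0 \<le> a $ k" "0 \<le> \<alpha>" "\<alpha> \<le> \<beta>"
  shows "0 \<le> (\<integral>u. indicator {-r..0} u * integral {\<alpha>+u..\<beta>+u} (\<lambda>v. a \<bullet> x v) \<partial>\<mu>)"
proof (rule Bochner_Integration.integral_nonneg)
  show "0 \<le> indicator {-r..0} u * integral {\<alpha>+u..\<beta>+u} (\<lambda>v. a \<bullet> x v)" for u
    using assms
    by (cases "u \<in> {-r..0}")
      (auto intro!: Henstock_Kurzweil_Integration.integral_nonneg integrable_inner_x inner_x_nonneg)
qed

lemma delay_integral_ge:
  assumes "\<And>k. 0 \<le> a $ k" "0 \<le> s" "s \<le> s'" "\<And>v. v \<in> {s..s'} \<Longrightarrow> \<kappa> \<le> a \<bullet> x v"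
  shows "(s' - s) * \<kappa> \<le> (\<integral>u. indicator {-r..0} u * integral {s+u..s'+r+u} (\<lambda>v. a \<bullet> x v) \<partial>\<mu>)"
proof (rule prob_space.integral_ge_const[OF prob_space_\<mu>])
  show "integrable \<mu> (\<lambda>u. indicator {-r..0} u * integral {s+u..s'+r+u} (\<lambda>v. a \<bullet> x v))"
    using assms delay_pos by (intro integrable_delay_integral) auto
  have "(s' - s) * \<kappa> \<le> indicator {-r..0} u * integral {s+u..s'+r+u} (\<lambda>v. a \<bullet> x v)"
    if "u \<in> {-r..0}" for u
  proof -
    have "(s' - s) * \<kappa> = integral {s..s'} (\<lambda>v. \<kappa>)"
      using assms by simp
    also have "\<dots> \<le> integral {s..s'} (\<lambda>v. a \<bullet> x v)"
      using assms delay_pos by (intro integral_le integrable_inner_x) auto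
    also have "\<dots> \<le> integral {s+u..s'+r+u} (\<lambda>v. a \<bullet> x v)"
      using that assms
      by (intro integral_subset_le integrable_inner_x ballI inner_x_nonneg) auto
    finally show ?thesis
      using that by simp
  qed
  then show "AE u in \<mu>. (s' - s) * \<kappa> \<le> indicator {-r..0} u * integral {s+u..s'+r+u} (\<lambda>v. a \<bullet> x v)"
    using AE_delay_window by (rule eventually_mono[rotated])
qed

lemma components_ge_near_far_time:
  assumes "0 < \<epsilon>"
  obtains h where "0 < h" and "\<And>t v k. 0 \<le> t \<Longrightarrow> \<epsilon> \<le> infdist (x t) simplex_boundary \<Longrightarrow>
      0 \<le> v \<Longrightarrow> \<bar>v - t\<bar> \<le> h \<Longrightarrow> \<epsilon> / 4 \<le> x v $ k"
proof
  define L where "L = 2 * onorm ((*v) A) + 1"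
  have "0 < L"
    using onorm_pos_le[OF matrix_vector_mul_bounded_linear[of A]] by (simp add: L_def)
  then show "0 < \<epsilon> / (4 * L)"
    using assms by simp
  fix t v k
  assume "0 \<le> t" "\<epsilon> \<le> infdist (x t) simplex_boundary" "0 \<le> v" "\<bar>v - t\<bar> \<le> \<epsilon> / (4 * L)"
  have "norm (x v - x t) \<le> L * \<bar>v - t\<bar>"
    using lipschitz_x[OF \<open>0 \<le> t\<close> \<open>0 \<le> v\<close>] by (simp add: L_def distrib_right)
  also have "\<dots> \<le> \<epsilon> / 4"
    using \<open>\<bar>v - t\<bar> \<le> \<epsilon> / (4 * L)\<close> \<open>0 < L\<close> by (simp add: field_simps)
  finally show "\<epsilon> / 4 \<le> x v $ k"
    using \<open>0 \<le> t\<close> delay_pos \<open>\<epsilon> \<le> infdist (x t) simplex_boundary\<close>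
    by (intro component_ge_near_far_point[of "x t"] x_in_simplex) auto
qed

lemma weighted_log_mono:
  assumes "(\<Sum>i\<in>UNIV. c $ i) = 0" "\<And>i. 0 < x 0 $ i" "\<And>i. 0 \<le> (transpose A *v c) $ i"
    and "0 \<le> s" "s \<le> t"
  shows "weighted_log c (x s) \<le> weighted_log c (x t)"
  using weighted_log_increment[OF assms(1,2,4,5)] delay_integral_nonneg[OF assms(3-5)] by simp

lemma weighted_log_le_if_far:
  assumes "0 < \<epsilon>" "0 \<le> t" "\<epsilon> \<le> infdist (x t) simplex_boundary"
  shows "weighted_log c (x t) \<le> (\<Sum>i\<in>UNIV. \<bar>c $ i\<bar>) * \<bar>ln (\<epsilon> / 2)\<bar>"
proof -
  have "\<epsilon> / 2 \<le> x t $ i" "x t $ i \<le> 1" for i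
    using assms delay_pos infdist_simplex_boundary_le[OF x_in_simplex, of t i]
      component_le_1_if_prob_simplex[OF x_in_simplex, of t i] by auto
  then show ?thesis
    using assms(1) by (intro order_trans[OF abs_ge_self abs_weighted_log_le]) auto
qed

lemma weighted_log_jumps_if_far:
  assumes "(\<Sum>i\<in>UNIV. c $ i) = 0" "\<And>i. 0 < x 0 $ i" "\<And>i. 0 \<le> (transpose A *v c) $ i"
    and "transpose A *v c \<noteq> 0" "0 < \<epsilon>"
  obtains h d where "0 < h" "0 < d"
    "\<And>t. 0 \<le> t \<Longrightarrow> \<epsilon> \<le> infdist (x t) simplex_boundary \<Longrightarrow> h \<le> t \<Longrightarrow>
      weighted_log c (x (t - h)) + d \<le> weighted_log c (x (t + (h + r)))"
proof -
  define a where "a = transpose A *v c"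
  obtain h where "0 < h" and near: "\<And>t v k. 0 \<le> t \<Longrightarrow> \<epsilon> \<le> infdist (x t) simplex_boundary \<Longrightarrow>
      0 \<le> v \<Longrightarrow> \<bar>v - t\<bar> \<le> h \<Longrightarrow> \<epsilon> / 4 \<le> x v $ k"
    using components_ge_near_far_time[OF assms(5)] by blast
  define \<kappa> where "\<kappa> = (\<Sum>k\<in>UNIV. a $ k) * (\<epsilon> / 4)"
  have "0 < (\<Sum>k\<in>UNIV. a $ k)"
    using assms(3,4) by (simp add: a_def sum_nonneg_eq_0_iff vec_eq_iff less_le sum_nonneg)
  then have "0 < 2 * h * \<kappa>"
    using \<open>0 < h\<close> assms(5) by (simp add: \<kappa>_def)
  moreover have "weighted_log c (x (t - h)) + 2 * h * \<kappa> \<le> weighted_log c (x (t + (h + r)))"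
    if "0 \<le> t" "\<epsilon> \<le> infdist (x t) simplex_boundary" "h \<le> t" for t
  proof -
    have "\<kappa> \<le> a \<bullet> x v" if "v \<in> {t - h..t + h}" for v
    proof -
      have "(\<Sum>k\<in>UNIV. a $ k * (\<epsilon> / 4)) \<le> (\<Sum>k\<in>UNIV. a $ k * x v $ k)"
        using near[of t v] \<open>0 \<le> t\<close> \<open>\<epsilon> \<le> infdist (x t) simplex_boundary\<close> \<open>h \<le> t\<close> that assms(3)
        by (intro sum_mono mult_left_mono) (auto simp: a_def)
      then show ?thesis
        by (simp only: \<kappa>_def inner_vec_def inner_real_def sum_distrib_right)
    qed
    then have "(t + h - (t - h)) * \<kappa>
        \<le> weighted_log c (x (t + h + r)) - weighted_log c (x (t - h))"
      using delay_integral_ge[of a "t - h" "t + h" \<kappa>] weighted_log_increment[OF assms(1,2), of "t - h" "t + h + r"]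
        assms(3) \<open>h \<le> t\<close> \<open>0 < h\<close> delay_pos by (simp add: a_def)
    then show ?thesis
      by (simp add: algebra_simps)
  qed
  ultimately show ?thesis
    using that \<open>0 < h\<close> by blast
qed

lemma infdist_boundary_tendsto_0:
  assumes "\<nexists>p. interior_equilibrium A p"
  shows "((\<lambda>t. infdist (x t) simplex_boundary) \<longlongrightarrow> 0) at_top"
proof (cases "\<exists>i. x 0 $ i = 0")
  case True
  then obtain i where "x 0 $ i = 0"
    by blast
  have "eventually (\<lambda>t. infdist (x t) simplex_boundary = 0) at_top"
    using eventually_ge_at_top[of 0]
    by eventually_elim (use x_in_boundary_if_face[OF \<open>x 0 $ i = 0\<close>] in \<open>auto intro: infdist_zero\<close>)
  then show ?thesis
    by (rule tendsto_eventually)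
next
  case False
  then have pos: "0 < x 0 $ i" for i
    using initial_in_simplex[of 0] delay_pos by (force simp: prob_simplex_def less_le)
  obtain c where c: "(\<Sum>i\<in>UNIV. c $ i) = 0" "\<And>i. 0 \<le> (transpose A *v c) $ i"
    "transpose A *v c \<noteq> 0"
    using no_interior_equilibrium_imp_separating_weights[OF assms] by blast
  have "eventually (\<lambda>t. infdist (x t) simplex_boundary < \<epsilon>) at_top" if "0 < \<epsilon>" for \<epsilon>
  proof -
    obtain h d where "0 < h" "0 < d" and jump: "\<And>t. 0 \<le> t \<Longrightarrow>
        \<epsilon> \<le> infdist (x t) simplex_boundary \<Longrightarrow> h \<le> t \<Longrightarrow>
        weighted_log c (x (t - h)) + d \<le> weighted_log c (x (t + (h + r)))"
      using weighted_log_jumps_if_far[OF c(1) pos c(2,3) \<open>0 < \<epsilon>\<close>] by blast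
    have "eventually (\<lambda>t. \<not> (0 \<le> t \<and> \<epsilon> \<le> infdist (x t) simplex_boundary)) at_top"
      using weighted_log_mono[OF c(1) pos c(2)] weighted_log_le_if_far[OF \<open>0 < \<epsilon>\<close>] jump
        \<open>0 < h\<close> \<open>0 < d\<close> delay_pos
      by (intro bounded_jumps_eventually_stop[where V="\<lambda>t. weighted_log c (x t)" and h=h and d=d
            and l="h + r" and B="(\<Sum>i\<in>UNIV. \<bar>c $ i\<bar>) * \<bar>ln (\<epsilon> / 2)\<bar>"]) auto
    then show ?thesis
      using eventually_ge_at_top[of 0] by eventually_elim auto
  qed
  then show ?thesis
    by (intro tendstoI) (simp add: infdist_nonneg)
qed

lemma integrable_x: "x integrable_on {0..T}"
  using delay_pos by (intro integrable_continuous_real continuous_on_subset[OF continuous_x]) auto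

lemma inner_integral_x_bounded:
  assumes "0 < \<eta>" "\<And>t k. 0 \<le> t \<Longrightarrow> \<eta> \<le> x t $ k" "(\<Sum>i\<in>UNIV. c $ i) = 0" "0 \<le> T"
  shows "\<bar>(transpose A *v c) \<bullet> integral {0..T} x\<bar>
    \<le> 2 * (\<Sum>i\<in>UNIV. \<bar>c $ i\<bar>) * \<bar>ln \<eta>\<bar> + 2 * r * norm (transpose A *v c)"
proof -
  define a where "a = transpose A *v c"
  have "0 < x 0 $ i" for i
    using assms(1) assms(2)[of 0 i] by simp
  note increment = weighted_log_increment[OF assms(3) this order_refl assms(4)]
  have log_bound: "\<bar>weighted_log c (x t)\<bar> \<le> (\<Sum>i\<in>UNIV. \<bar>c $ i\<bar>) * \<bar>ln \<eta>\<bar>" if "0 \<le> t" for t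
    using that assms delay_pos
    by (intro abs_weighted_log_le component_le_1_if_prob_simplex x_in_simplex) auto
  have "a \<bullet> integral {0..T} x = integral {0..T} (\<lambda>v. a \<bullet> x v)"
    using integral_linear[OF integrable_x[of T] bounded_linear_inner_right[of a]] by (simp add: o_def)
  then show ?thesis
    using increment delay_integral_approx[OF assms(4), of a] log_bound[of 0] log_bound[OF assms(4)]
    unfolding a_def by (simp only: add_0 abs_le_iff) linarith
qed

lemma time_average_in_simplex:
  assumes "\<And>t k. 0 \<le> t \<Longrightarrow> \<eta> \<le> x t $ k" "0 < T"
  shows "(1 / T) *\<^sub>R integral {0..T} x \<in> {z. (\<forall>k. \<eta> \<le> z $ k) \<and> (\<Sum>k\<in>UNIV. z $ k) = 1}"
proof -
  have integrable: "(\<lambda>t. x t $ k) integrable_on {0..T}" for k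
    using delay_pos
    by (intro integrable_continuous_real continuous_on_component continuous_on_subset[OF continuous_x])
      auto
  have lower: "\<eta> * T \<le> integral {0..T} (\<lambda>t. x t $ k)" for k
  proof -
    have "integral {0..T} (\<lambda>t. \<eta>) \<le> integral {0..T} (\<lambda>t. x t $ k)"
      using assms by (intro integral_le integrable) auto
    then show ?thesis
      using assms(2) by (simp add: mult.commute)
  qed
  have "(\<Sum>k\<in>UNIV. integral {0..T} (\<lambda>t. x t $ k)) = integral {0..T} (\<lambda>t. \<Sum>k\<in>UNIV. x t $ k)"
    by (rule integral_sum[symmetric]) (auto intro: integrable)
  also have "\<dots> = integral {0..T} (\<lambda>t. 1)"
    by (intro integral_cong sum_x_eq_1) auto
  finally have "(\<Sum>k\<in>UNIV. integral {0..T} (\<lambda>t. x t $ k)) = T"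
    using assms(2) by simp
  then show ?thesis
    using lower assms(2)
    by (simp add: pos_le_divide_eq integral_component_eq_cart[OF integrable_x]
        flip: sum_divide_distrib)
qed

lemma inner_time_average_tendsto_0:
  assumes "0 < \<eta>" "\<And>t k. 0 \<le> t \<Longrightarrow> \<eta> \<le> x t $ k" "(\<Sum>i\<in>UNIV. c $ i) = 0"
  shows "((\<lambda>T. (transpose A *v c) \<bullet> ((1 / T) *\<^sub>R integral {0..T} x)) \<longlongrightarrow> 0) at_top"
proof (rule Lim_null_comparison)
  define C where "C = 2 * (\<Sum>i\<in>UNIV. \<bar>c $ i\<bar>) * \<bar>ln \<eta>\<bar> + 2 * r * norm (transpose A *v c)"
  show "eventually (\<lambda>T. norm ((transpose A *v c) \<bullet> ((1 / T) *\<^sub>R integral {0..T} x)) \<le> C * inverse T)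
      at_top"
    using eventually_gt_at_top[of 0]
    by eventually_elim
      (use inner_integral_x_bounded[OF assms] in \<open>simp add: C_def divide_simps mult.commute\<close>)
  show "((\<lambda>T. C * inverse T) \<longlongrightarrow> 0) at_top"
    using tendsto_mult_right_zero[OF tendsto_inverse_0_at_top[OF filterlim_ident]] by simp
qed

lemma time_average_tendsto_equilibrium:
  assumes "interior_equilibrium A p" "\<And>q. interior_equilibrium A q \<Longrightarrow> q = p"
    and "0 < \<eta>" "\<And>t k. 0 \<le> t \<Longrightarrow> \<eta> \<le> x t $ k"
  shows "((\<lambda>T. integral {0..T} (\<lambda>t. x t $ i) / T) \<longlongrightarrow> p $ i) at_top"
proof -
  define \<xi> where "\<xi> T = (1 / T) *\<^sub>R integral {0..T} x" for T
  define K :: "(real^'d) set" where "K = {z. (\<forall>k. \<eta> \<le> z $ k) \<and> (\<Sum>k\<in>UNIV. z $ k) = 1}"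
  define F where "F z = (\<chi> i j. (A *v z) $ i - (A *v z) $ j)" for z :: "real^'d"
  have "compact K"
    unfolding K_def using assms(3) by (intro compact_simplex_bounded_below) simp
  moreover have "continuous_on K F"
    unfolding F_def matrix_vector_mul_component by (intro continuous_on_vec_lambda continuous_intros)
  moreover have "z = p" if "z \<in> K" "F z = 0" for z
  proof (rule assms(2))
    have "z \<in> simplex_interior"
      using that(1) assms(3) by (auto simp: K_def simplex_interior_def intro: less_le_trans)
    moreover have "(A *v z) $ i = (A *v z) $ j" for i j
      using that(2) by (simp add: F_def vec_eq_iff)
    ultimately show "interior_equilibrium A z"
      by (simp add: interior_equilibrium_def)
  qed
  moreover have "eventually (\<lambda>T. \<xi> T \<in> K) at_top"
    using eventually_gt_at_top[of 0] unfolding K_def \<xi>_def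
    by eventually_elim (rule time_average_in_simplex[OF assms(4)])
  moreover have "((\<lambda>T. F (\<xi> T)) \<longlongrightarrow> 0) at_top"
  proof (intro vec_tendstoI)
    fix i j :: 'd
    have "(\<Sum>k\<in>UNIV. (axis i 1 - axis j 1) $ k) = (0::real)"
      by (simp add: axis_def sum_subtractf)
    from inner_time_average_tendsto_0[OF assms(3,4) this]
    have "((\<lambda>T. (transpose A *v (axis i 1 - axis j 1)) \<bullet> \<xi> T) \<longlongrightarrow> 0) at_top"
      by (simp only: \<xi>_def)
    then show "((\<lambda>T. F (\<xi> T) $ i $ j) \<longlongrightarrow> 0 $ i $ j) at_top"
      by (simp add: F_def payoff_difference_eq_inner)
  qed
  ultimately have "(\<xi> \<longlongrightarrow> p) at_top"
    by (rule tendsto_unique_zero_in_compact)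
  from tendsto_vec_nth[OF this, of i] show ?thesis
    by (simp add: \<xi>_def integral_component_eq_cart[OF integrable_x])
qed

end

theorem theorem2:
  fixes A :: "real^'d^'d" and r :: real and x :: "real \<Rightarrow> real^'d" and \<mu> :: "real measure"
  assumes "r > 0"
    and "delayed_replicator_solution A r x \<or> distributed_replicator_solution A r \<mu> x"
  shows "(\<not> (\<exists>p. interior_equilibrium A p) \<longrightarrow>
            ((\<lambda>t. infdist (x t) simplex_boundary) \<longlongrightarrow> 0) at_top)
       \<and> (\<forall>p. interior_equilibrium A p \<and> (\<forall>q. interior_equilibrium A q \<longrightarrow> q = p) \<longrightarrow>
            (\<forall>t\<ge>0. x t \<in> simplex_interior) \<longrightarrow>
            (\<exists>\<delta>>0. \<forall>t\<ge>0. \<delta> \<le> infdist (x t) simplex_boundary) \<longrightarrow>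
            (\<forall>i. ((\<lambda>T. integral {0..T} (\<lambda>t. x t $ i) / T) \<longlongrightarrow> p $ i) at_top))"
proof -
  obtain \<nu> where "distributed_replicator_solution A r \<nu> x"
    using assms(2) delayed_replicator_solution_imp_distributed[OF assms(1)] by blast
  then interpret distributed_replicator A r \<nu> x
    using assms(1) by unfold_locales
  show ?thesis
  proof (intro conjI impI allI)
    assume "\<nexists>p. interior_equilibrium A p"
    then show "((\<lambda>t. infdist (x t) simplex_boundary) \<longlongrightarrow> 0) at_top"
      by (rule infdist_boundary_tendsto_0)
  next
    fix p i
    \<comment> \<open>the hypothesis that \<open>x\<close> stays in the interior is implied by the distance bound\<close>
    assume "interior_equilibrium A p \<and> (\<forall>q. interior_equilibrium A q \<longrightarrow> q = p)"
      and "\<exists>\<delta>>0. \<forall>t\<ge>0. \<delta> \<le> infdist (x t) simplex_boundary"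
    then obtain \<delta> where p: "interior_equilibrium A p" "\<And>q. interior_equilibrium A q \<Longrightarrow> q = p"
      and "0 < \<delta>" and far: "\<And>t. 0 \<le> t \<Longrightarrow> \<delta> \<le> infdist (x t) simplex_boundary"
      by blast
    have "\<delta> / 2 \<le> x t $ k" if "0 \<le> t" for t k
      using far[OF that] infdist_simplex_boundary_le[OF x_in_simplex, of t k] that delay_pos by auto
    moreover have "0 < \<delta> / 2"
      using \<open>0 < \<delta>\<close> by simp
    ultimately show "((\<lambda>T. integral {0..T} (\<lambda>t. x t $ i) / T) \<longlongrightarrow> p $ i) at_top"
      using time_average_tendsto_equilibrium[OF p] by blast
  qed
qed

end
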